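(* Let $K\ge 2$ and let $\mathbf{Q}^\star,\mathbf{Q}_r,\mathbf{z}^\star,\mathbf{z}_r$ be as in the context. Then $$\left|\mathbf{z}^{\star\dagger}\mathbf{Q}^\star\mathbf{z}^\star-\mathbf{z}_r^\dagger\mathbf{Q}^\star\mathbf{z}_r\right|\le 2n\,\|\mathbf{Q}^\star-\mathbf{Q}_r\|_2.$$
   Context: $\mathcal{A}_K=\{\exp(2\pi\mathrm{i}k/K):k=0,\dots,K-1\}$. $\mathbf{Q}^\star\in\mathbb{C}^{n\times n}$ is Hermitian positive semi-definite; $\mathbf{H}\in\mathbb{C}^{n\times n}$ arbitrary; $\mathbf{Q}=\mathbf{Q}^\star+\mathbf{H}$. $\mathbf{Q}_r=\mathbf{V}_r\boldsymbol{\Sigma}_r\mathbf{V}_r^\dagger$ with $\boldsymbol{\Sigma}_r$ the top-$r$ singular values of $\mathbf{Q}$ and $\mathbf{V}_r$ the corresponding left singular vectors. $\mathbf{z}^\star$ attains $\max_{\mathbf{z}\in\mathcal{A}_K^n}\mathbf{z}^\dagger\mathbf{Q}^\star\mathbf{z}$ and $\mathbf{z}_r$ attains $\max_{\mathbf{z}\in\mathcal{A}_K^n}\mathbf{z}^\dagger\mathbf{Q}_r\mathbf{z}$. $\|\cdot\|_2$ is the spectral norm. *)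

theory Defs
  imports "Jordan_Normal_Form.Schur_Decomposition" "Jordan_Normal_Form.Char_Poly"
begin

definition phase_alphabet :: "nat \<Rightarrow> complex set" where
  "phase_alphabet K = {exp (2 * pi * \<i> * of_nat k / of_nat K) | k. k < K}"

definition phase_vecs :: "nat \<Rightarrow> nat \<Rightarrow> complex vec set" where
  "phase_vecs K n = {z \<in> carrier_vec n. \<forall>i<n. z $ i \<in> phase_alphabet K}"

definition qform :: "complex mat \<Rightarrow> complex vec \<Rightarrow> complex" where
  "qform A z = conjugate z \<bullet> (A *\<^sub>v z)"

definition hermitian :: "complex mat \<Rightarrow> bool" where
  "hermitian A \<longleftrightarrow> A \<in> carrier_mat (dim_row A) (dim_row A) \<and> mat_adjoint A = A"

definition psd :: "complex mat \<Rightarrow> bool" where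
  "psd A \<longleftrightarrow> hermitian A \<and> (\<forall>x \<in> carrier_vec (dim_row A). 0 \<le> Re (qform A x))"

definition vnorm :: "complex vec \<Rightarrow> real" where
  "vnorm v = sqrt (\<Sum>i<dim_vec v. (cmod (v $ i))\<^sup>2)"

definition spec_norm :: "complex mat \<Rightarrow> real" where
  "spec_norm A = Sup {vnorm (A *\<^sub>v x) | x. x \<in> carrier_vec (dim_col A) \<and> vnorm x = 1}"

(* s is the list of singular values of the square matrix Q, in non-increasing order
   (with multiplicity): the squares s_i^2 are the eigenvalues of Q Q^dagger *)
definition singular_values :: "complex mat \<Rightarrow> real list \<Rightarrow> bool" where
  "singular_values Q s \<longleftrightarrow> length s = dim_row Q \<and> sorted_wrt (\<ge>) s \<and> (\<forall>x\<in>set s. 0 \<le> x) \<and>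
     char_poly (Q * mat_adjoint Q) = (\<Prod>x\<leftarrow>s. [:- complex_of_real (x\<^sup>2), 1:])"

(* Qr = V_r Sigma_r V_r^dagger where Sigma_r holds the top-r singular values of Q and
   the (orthonormal) columns of V_r are corresponding left singular vectors of Q *)
definition truncated_svd :: "complex mat \<Rightarrow> nat \<Rightarrow> complex mat \<Rightarrow> bool" where
  "truncated_svd Q r Qr \<longleftrightarrow> (\<exists>s V. singular_values Q s \<and>
     V \<in> carrier_mat (dim_row Q) r \<and> mat_adjoint V * V = 1\<^sub>m r \<and>
     Q * mat_adjoint Q * V = V * mat_diag r (\<lambda>i. complex_of_real ((s ! i)\<^sup>2)) \<and>
     Qr = V * mat_diag r (\<lambda>i. complex_of_real (s ! i)) * mat_adjoint V)"

end

theory Submission imports Defs "HOL-Analysis.L2_Norm" begin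

(* Write f z = Re (z\<^sup>\<dagger> Q\<^sup>\<star> z) and g z = Re (z\<^sup>\<dagger> Q\<^sub>r z). As z\<^sup>\<star> maximises f and z\<^sub>r maximises g,
   0 \<le> f z\<^sup>\<star> - f z\<^sub>r \<le> (f - g) z\<^sup>\<star> - (f - g) z\<^sub>r, and each term on the right is bounded by
   |z\<^sup>\<dagger> (Q\<^sup>\<star> - Q\<^sub>r) z| \<le> \<parallel>z\<parallel>\<^sup>2 \<parallel>Q\<^sup>\<star> - Q\<^sub>r\<parallel>\<^sub>2 = n \<parallel>Q\<^sup>\<star> - Q\<^sub>r\<parallel>\<^sub>2, since phase vectors have entries of modulus one.
   Hermitian symmetry of Q\<^sup>\<star> makes z\<^sup>\<dagger> Q\<^sup>\<star> z real, so f measures the whole difference; of Q\<^sub>r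
   only its size n \<times> n matters. *)

lemma abs_diff_maximizers_le:
  fixes f g :: "'a \<Rightarrow> real"
  assumes "x \<in> S" "y \<in> S"
    and "\<forall>z\<in>S. f z \<le> f x" "\<forall>z\<in>S. g z \<le> g y"
    and "\<forall>z\<in>S. \<bar>f z - g z\<bar> \<le> e"
  shows "\<bar>f x - f y\<bar> \<le> 2 * e"
proof -
  have "f y \<le> f x" "g x \<le> g y" "\<bar>f x - g x\<bar> \<le> e" "\<bar>f y - g y\<bar> \<le> e"
    using assms by auto
  then show ?thesis by linarith
qed

lemma qform_eq_double_sum:
  assumes "A \<in> carrier_mat n n" "z \<in> carrier_vec n"
  shows "qform A z = (\<Sum>i<n. \<Sum>j<n. cnj (z$i) * A$$(i,j) * z$j)"
proof -
  have "qform A z = (\<Sum>i<n. cnj (z$i) * (A *\<^sub>v z)$i)"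
    using assms unfolding qform_def scalar_prod_def by (simp add: lessThan_atLeast0)
  also have "\<dots> = (\<Sum>i<n. cnj (z$i) * (\<Sum>j<n. A$$(i,j) * z$j))"
    using assms by (intro sum.cong refl) (simp add: scalar_prod_def lessThan_atLeast0)
  finally show ?thesis by (simp add: sum_distrib_left mult.assoc)
qed

lemma hermitian_entry_swap:
  assumes "hermitian A" "A \<in> carrier_mat n n" "i < n" "j < n"
  shows "A$$(j,i) = cnj (A$$(i,j))"
proof -
  have "mat_adjoint A $$ (j,i) = cnj (A$$(i,j))"
    using assms unfolding mat_adjoint_def by (simp add: mat_of_rows_def)
  then show ?thesis using assms unfolding hermitian_def by simp
qed

lemma hermitian_qform_real:
  assumes "hermitian A" "A \<in> carrier_mat n n" "z \<in> carrier_vec n"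
  shows "Im (qform A z) = 0"
proof -
  have "cnj (qform A z) = (\<Sum>i<n. \<Sum>j<n. z$i * cnj (A$$(i,j)) * cnj (z$j))"
    unfolding qform_eq_double_sum[OF assms(2,3)] cnj_sum complex_cnj_mult complex_cnj_cnj ..
  also have "\<dots> = (\<Sum>i<n. \<Sum>j<n. cnj (z$j) * A$$(j,i) * z$i)"
  proof (intro sum.cong refl)
    fix i j assume "i \<in> {..<n}" "j \<in> {..<n}"
    then show "z$i * cnj (A$$(i,j)) * cnj (z$j) = cnj (z$j) * A$$(j,i) * z$i"
      by (simp only: hermitian_entry_swap[OF assms(1,2), of i j] lessThan_iff ac_simps)
  qed
  also have "\<dots> = qform A z"
    by (subst sum.swap) (simp only: qform_eq_double_sum[OF assms(2,3)])
  finally show ?thesis by (metis Reals_cnj_iff complex_is_Real_iff)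
qed

lemma qform_minus_mat:
  assumes "A \<in> carrier_mat n n" "B \<in> carrier_mat n n" "z \<in> carrier_vec n"
  shows "qform (A - B) z = qform A z - qform B z"
proof -
  have "(A - B) *\<^sub>v z = A *\<^sub>v z - B *\<^sub>v z"
    using assms by (simp add: minus_mult_distrib_mat_vec)
  then show ?thesis unfolding qform_def using assms
    by (simp add: scalar_prod_minus_distrib[of _ n])
qed

lemma vnorm_eq_L2_set: "vnorm v = L2_set (\<lambda>i. cmod (v$i)) {..<dim_vec v}"
  unfolding vnorm_def L2_set_def by simp

lemma cmod_conjugate_scalar_prod_le:
  assumes "z \<in> carrier_vec n" "w \<in> carrier_vec n"
  shows "cmod (conjugate z \<bullet> w) \<le> vnorm z * vnorm w"
proof -
  have "conjugate z \<bullet> w = (\<Sum>i<n. cnj (z$i) * w$i)"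
    using assms unfolding scalar_prod_def by (simp add: lessThan_atLeast0)
  then have "cmod (conjugate z \<bullet> w) \<le> (\<Sum>i<n. \<bar>cmod (z$i)\<bar> * \<bar>cmod (w$i)\<bar>)"
    by (simp add: sum_norm_le norm_mult)
  also have "\<dots> \<le> L2_set (\<lambda>i. cmod (z$i)) {..<n} * L2_set (\<lambda>i. cmod (w$i)) {..<n}"
    by (rule L2_set_mult_ineq)
  also have "\<dots> = vnorm z * vnorm w" using assms by (simp add: vnorm_eq_L2_set)
  finally show ?thesis .
qed

lemma vnorm_nonneg: "vnorm x \<ge> 0"
  unfolding vnorm_def by (simp add: sum_nonneg)

lemma vnorm_smult_vec: "vnorm (c \<cdot>\<^sub>v x) = cmod c * vnorm x"
proof -
  have "(\<Sum>i<dim_vec x. (cmod ((c \<cdot>\<^sub>v x) $ i))\<^sup>2) = (cmod c)\<^sup>2 * (\<Sum>i<dim_vec x. (cmod (x $ i))\<^sup>2)"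
    by (simp add: sum_distrib_left norm_mult power_mult_distrib)
  then show ?thesis unfolding vnorm_def by (simp add: real_sqrt_mult)
qed

lemma vnorm_eq_0_iff:
  assumes "x \<in> carrier_vec n"
  shows "vnorm x = 0 \<longleftrightarrow> x = 0\<^sub>v n"
  using assms by (auto simp: vnorm_eq_L2_set L2_set_eq_0_iff vec_eq_iff)

lemma vnorm_mult_mat_vec_le_entry_sum:
  assumes "A \<in> carrier_mat m n" "x \<in> carrier_vec n" "vnorm x = 1"
  shows "vnorm (A *\<^sub>v x) \<le> (\<Sum>i<m. \<Sum>j<n. cmod (A$$(i,j)))"
proof -
  have x_le_1: "cmod (x$j) \<le> 1" if "j < n" for j
    using member_le_L2_set[of "{..<n}" j "\<lambda>i. cmod (x$i)"] that assms
    by (simp add: vnorm_eq_L2_set)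
  have "cmod ((A *\<^sub>v x)$i) \<le> (\<Sum>j<n. cmod (A$$(i,j)))" if "i < m" for i
  proof -
    have "cmod ((A *\<^sub>v x)$i) \<le> (\<Sum>j<n. cmod (A$$(i,j) * x$j))"
      using assms that by (simp add: scalar_prod_def lessThan_atLeast0 sum_norm_le)
    also have "\<dots> \<le> (\<Sum>j<n. cmod (A$$(i,j)))"
      using x_le_1 by (intro sum_mono) (simp add: norm_mult mult_left_le)
    finally show ?thesis .
  qed
  then have "(\<Sum>i<m. cmod ((A *\<^sub>v x)$i)) \<le> (\<Sum>i<m. \<Sum>j<n. cmod (A$$(i,j)))"
    by (intro sum_mono) simp
  moreover have "vnorm (A *\<^sub>v x) \<le> (\<Sum>i<m. cmod ((A *\<^sub>v x)$i))"
    using L2_set_le_sum[of "{..<m}" "\<lambda>i. cmod ((A *\<^sub>v x)$i)"] assms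
    by (simp add: vnorm_eq_L2_set)
  ultimately show ?thesis by linarith
qed

lemma vnorm_mult_mat_vec_le:
  assumes "A \<in> carrier_mat m n" "x \<in> carrier_vec n"
  shows "vnorm (A *\<^sub>v x) \<le> spec_norm A * vnorm x"
proof (cases "vnorm x = 0")
  case True
  then have "A *\<^sub>v x = 0\<^sub>v m"
    using assms by (intro eq_vecI) (auto simp: vnorm_eq_0_iff)
  then show ?thesis using True by (simp add: vnorm_def)
next
  case False
  define c where "c = complex_of_real (1 / vnorm x)"
  have c: "cmod c = 1 / vnorm x"
    unfolding c_def norm_of_real using vnorm_nonneg[of x] by simp
  let ?S = "{vnorm (A *\<^sub>v y) | y. y \<in> carrier_vec (dim_col A) \<and> vnorm y = 1}"
  have "vnorm (A *\<^sub>v (c \<cdot>\<^sub>v x)) \<in> ?S"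
    using assms False c by (auto simp: vnorm_smult_vec)
  moreover have "bdd_above ?S"
    using vnorm_mult_mat_vec_le_entry_sum[OF assms(1)] assms(1)
    by (intro bdd_aboveI[where M = "\<Sum>i<m. \<Sum>j<n. cmod (A$$(i,j))"]) auto
  ultimately have "vnorm (A *\<^sub>v (c \<cdot>\<^sub>v x)) \<le> spec_norm A"
    unfolding spec_norm_def by (rule cSup_upper)
  moreover have "A *\<^sub>v (c \<cdot>\<^sub>v x) = c \<cdot>\<^sub>v (A *\<^sub>v x)"
    using assms by (simp add: mult_mat_vec)
  ultimately show ?thesis
    using False c vnorm_nonneg[of x] by (simp add: vnorm_smult_vec pos_divide_le_eq)
qed

lemma cmod_qform_le:
  assumes "A \<in> carrier_mat n n" "z \<in> carrier_vec n"
  shows "cmod (qform A z) \<le> (vnorm z)\<^sup>2 * spec_norm A"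
proof -
  have "cmod (qform A z) \<le> vnorm z * vnorm (A *\<^sub>v z)"
    unfolding qform_def using assms by (intro cmod_conjugate_scalar_prod_le) auto
  also have "\<dots> \<le> vnorm z * (spec_norm A * vnorm z)"
    using vnorm_mult_mat_vec_le[OF assms] vnorm_nonneg by (intro mult_left_mono) auto
  finally show ?thesis by (simp add: power2_eq_square ac_simps)
qed

lemma cmod_phase_alphabet: "a \<in> phase_alphabet K \<Longrightarrow> cmod a = 1"
  unfolding phase_alphabet_def by (auto simp: norm_exp_eq_Re)

lemma phase_vecs_carrier: "z \<in> phase_vecs K n \<Longrightarrow> z \<in> carrier_vec n"
  unfolding phase_vecs_def by simp

lemma vnorm_phase_vec:
  assumes "z \<in> phase_vecs K n"
  shows "vnorm z = sqrt (real n)"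
proof -
  have "(\<Sum>i<n. (cmod (z$i))\<^sup>2) = (\<Sum>i<n. 1)"
    using assms unfolding phase_vecs_def by (intro sum.cong) (auto simp: cmod_phase_alphabet)
  moreover have "dim_vec z = n" using assms unfolding phase_vecs_def by auto
  ultimately show ?thesis unfolding vnorm_def by simp
qed

lemma truncated_svd_carrier:
  "truncated_svd Q r Qr \<Longrightarrow> Qr \<in> carrier_mat (dim_row Q) (dim_row Q)"
  unfolding truncated_svd_def mat_adjoint_def by auto

theorem lemma10:
  fixes n K r :: nat and Qs H Q Qr :: "complex mat" and zs zr :: "complex vec"
  assumes "K \<ge> 2"
    and "Qs \<in> carrier_mat n n" and "psd Qs"
    and "H \<in> carrier_mat n n"
    and "Q = Qs + H"
    and "r \<le> n"
    and "truncated_svd Q r Qr"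
    and "zs \<in> phase_vecs K n"
    and "\<forall>z \<in> phase_vecs K n. Re (qform Qs z) \<le> Re (qform Qs zs)"
    and "zr \<in> phase_vecs K n"
    and "\<forall>z \<in> phase_vecs K n. Re (qform Qr z) \<le> Re (qform Qr zr)"
  shows "cmod (qform Qs zs - qform Qs zr) \<le> 2 * real n * spec_norm (Qs - Qr)"
proof -
  have Qr: "Qr \<in> carrier_mat n n"
    using truncated_svd_carrier[OF assms(7)] assms(2,4,5) by simp
  have close: "\<bar>Re (qform Qs z) - Re (qform Qr z)\<bar> \<le> real n * spec_norm (Qs - Qr)"
    if z: "z \<in> phase_vecs K n" for z
  proof -
    have "\<bar>Re (qform Qs z) - Re (qform Qr z)\<bar> \<le> cmod (qform (Qs - Qr) z)"
      using qform_minus_mat[OF assms(2) Qr phase_vecs_carrier[OF z]]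
        abs_Re_le_cmod[of "qform Qs z - qform Qr z"] by simp
    also have "\<dots> \<le> real n * spec_norm (Qs - Qr)"
      using cmod_qform_le[OF minus_carrier_mat[OF Qr] phase_vecs_carrier[OF z]] vnorm_phase_vec[OF z]
      by simp
    finally show ?thesis .
  qed
  have "Im (qform Qs zs - qform Qs zr) = 0"
    using assms(2,3,8,10) by (simp add: psd_def hermitian_qform_real phase_vecs_carrier)
  then have "cmod (qform Qs zs - qform Qs zr) = \<bar>Re (qform Qs zs) - Re (qform Qs zr)\<bar>"
    by (simp add: cmod_eq_Re)
  also have "\<dots> \<le> 2 * (real n * spec_norm (Qs - Qr))"
    using close assms(8-11) by (intro abs_diff_maximizers_le[where S = "phase_vecs K n"]) auto
  finally show ?thesis by simp
qed

end
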